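(* Let $\bar U\in\mathcal{U}$ be such that $(A_{\bar U},G_{\bar U})$ is reachable and $(C_{\bar U},A_{\bar U})$ is observable. Let $\tilde R$ be the unique positive definite solution of $$\tilde R=A_{\bar U}(\tilde R-\tilde FC_{\bar U}\tilde R)A_{\bar U}^{\top}+G_{\bar U}G_{\bar U}^{\top},\qquad \tilde F=\tilde RC_{\bar U}^{\top}(C_{\bar U}\tilde RC_{\bar U}^{\top}+M)^{-1}.$$ Let $\sigma_1,\dots,\sigma_r$ be the eigenvalues of $A_{\bar U}(I_r-\tilde FC_{\bar U})\in\mathbb{R}^{r\times r}$. Then the eigenvalues of $A_d(I_n-\bar U\tilde FC)\in\mathbb{R}^{n\times n}$, counted with multiplicity, are $$\sigma_1,\dots,\sigma_r,\ e^{\lambda_{r+1}(A)h},\dots,e^{\lambda_n(A)h}.$$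
   Context: Let $A\in\mathbb{R}^{n\times n}$ have eigenvalues $\lambda_1(A),\dots,\lambda_n(A)$, ordered so that $\mathrm{Re}\,\lambda_1(A)\ge\dots\ge\mathrm{Re}\,\lambda_n(A)$, with unit-norm (generalized) eigenvectors $\psi_i(A)$. Fix $r\in\{1,\dots,n-1\}$ with $\mathrm{Re}\,\lambda_r(A)>\mathrm{Re}\,\lambda_{r+1}(A)$. Let $\mathrm{St}(r,n)=\{X\in\mathbb{R}^{n\times r}:X^{\top}X=I_r\}$ and $$\mathcal{U}=\{(\psi_1(A),\dots,\psi_r(A))K\in\mathrm{St}(r,n):K\in\mathbb{C}^{r\times r}\}.$$ These are the real orthonormal-column matrices whose column space is the $A$-invariant subspace spanned by $\psi_1(A),\dots,\psi_r(A)$; every $\bar U\in\mathcal{U}$ satisfies $(I_n-\bar U\bar U^{\top})A\bar U=0$. Let $h>0$, $A_d=e^{Ah}$, $G\in\mathbb{R}^{n\times q}$ and $$G_d=\sqrt{\int_0^h e^{A\tau}GG^{\top}e^{A^{\top}\tau}d\tau}$$ (positive semidefinite square root). Let $C\in\mathbb{R}^{p\times n}$ and $H\in\mathbb{R}^{p\times p}$ with $\det H\ne0$, and set $M=HH^{\top}$. Define $A_{\bar U}=\bar U^{\top}A_d\bar U$, $G_{\bar U}=\bar U^{\top}G_d$ and $C_{\bar U}=C\bar U$. *)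

theory Defs
  imports "HOL-Analysis.Analysis" "HOL-Computational_Algebra.Polynomial"
begin

primrec matpow :: "'a::comm_ring_1^'n^'n \<Rightarrow> nat \<Rightarrow> 'a^'n^'n" where
  "matpow A 0 = mat 1"
| "matpow A (Suc k) = A ** matpow A k"

definition mexp :: "real^'n^'n \<Rightarrow> real^'n^'n" where
  "mexp A = (\<chi> i j. (\<Sum>k. (matpow A k) $ i $ j / fact k))"

definition psd :: "real^'n^'n \<Rightarrow> bool" where
  "psd S \<longleftrightarrow> transpose S = S \<and> (\<forall>x. 0 \<le> x \<bullet> (S *v x))"

definition pd :: "real^'n^'n \<Rightarrow> bool" where
  "pd S \<longleftrightarrow> transpose S = S \<and> (\<forall>x. x \<noteq> 0 \<longrightarrow> 0 < x \<bullet> (S *v x))"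

definition psd_sqrt :: "real^'n^'n \<Rightarrow> real^'n^'n" where
  "psd_sqrt W = (THE S. psd S \<and> S ** S = W)"

definition disc_noise :: "real \<Rightarrow> real^'n^'n \<Rightarrow> real^'q^'n \<Rightarrow> real^'n^'n" where
  "disc_noise h A G = psd_sqrt (integral {0..h}
      (\<lambda>\<tau>. mexp (\<tau> *\<^sub>R A) ** G ** transpose G ** transpose (mexp (\<tau> *\<^sub>R A))))"

definition reachable :: "real^'r^'r \<Rightarrow> real^'q^'r \<Rightarrow> bool" where
  "reachable A B \<longleftrightarrow>
     span (\<Union>k\<in>{..<CARD('r)}. range (\<lambda>v. (matpow A k ** B) *v v)) = UNIV"

definition observable :: "real^'r^'p \<Rightarrow> real^'r^'r \<Rightarrow> bool" where
  "observable C A \<longleftrightarrow>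
     (\<forall>x. (\<forall>k<CARD('r). (C ** matpow A k) *v x = 0) \<longrightarrow> x = 0)"

definition cmat :: "real^'m^'n \<Rightarrow> complex^'m^'n" where
  "cmat A = (\<chi> i j. complex_of_real (A $ i $ j))"

text \<open>Characteristic polynomial det(x I - A) over the complex numbers; its roots,
  counted with multiplicity, are the eigenvalues of A counted with multiplicity.\<close>
definition charpoly :: "real^'n^'n \<Rightarrow> complex poly" where
  "charpoly A = det (\<chi> i j. (if i = j then [:0, 1:] else 0) - [: complex_of_real (A $ i $ j) :])"

definition gen_eigvecs :: "real^'n^'n \<Rightarrow> complex \<Rightarrow> (complex^'n) set" where
  "gen_eigvecs A \<mu> = {v. \<exists>k. matpow (cmat A - mat \<mu>) k *v v = 0}"

text \<open>The set U: real n x r matrices with orthonormal columns whose (complex) column space is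
  the span of the generalized eigenvectors of A for lambda_1,...,lambda_r (0-indexed: lam 0 .. lam (r-1)),
  r = CARD('r).\<close>
definition frames :: "real^'n^'n \<Rightarrow> (nat \<Rightarrow> complex) \<Rightarrow> (real^'r^'n) set" where
  "frames A lam = {U. transpose U ** U = mat 1 \<and>
      range (\<lambda>c. cmat U *v c) = vec.span (\<Union>i\<in>{..<CARD('r)}. gen_eigvecs A (lam i))}"

end

theory Submission
  imports Defs "Jordan_Normal_Form.Schur_Decomposition"
begin

text \<open>
  Write \<open>\<chi>\<close> for the characteristic polynomial. The columns of \<open>U\<close> span an
  \<open>A\<close>-invariant subspace, so \<open>A U = U B\<close> with \<open>B = U\<^sup>T A U\<close>, and hence
  \<open>A\<^sub>d U = U A\<^sub>U\<close> with \<open>A\<^sub>U = e\<^bsup>hB\<^esup>\<close>. Whenever \<open>X U = U Y\<close>, a block-determinant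
  computation gives \<open>\<chi>(X - U K) \<chi>(Y) = \<chi>(X) \<chi>(Y - K U)\<close> for every \<open>K\<close>; with
  \<open>X = A\<^sub>d\<close>, \<open>Y = A\<^sub>U\<close>, \<open>K = A\<^sub>U F C\<close> this reduces the claim to
  \<open>\<chi>(A\<^sub>d) = \<chi>(A\<^sub>U) \<cdot> \<Prod>\<^bsub>i > r\<^esub> (x - e\<^bsup>\<lambda>\<^sub>i h\<^esup>)\<close>.

  By Schur triangularisation the eigenvalues of \<open>e\<^bsup>hX\<^esup>\<close> are the \<open>e\<^bsup>\<mu> h\<^esup>\<close> for the
  eigenvalues \<open>\<mu>\<close> of \<open>X\<close>, so it remains to see that \<open>B\<close> has exactly the eigenvalues
  \<open>\<lambda>\<^sub>1, \<dots>, \<lambda>\<^sub>r\<close>. Taking \<open>X = A\<close>, \<open>Y = B\<close> and \<open>K = U\<^sup>T(A - c)\<close> in the identity above gives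
  \<open>\<chi>(A - U K) \<chi>(B) = \<chi>(A) (x - c)\<^sup>r\<close>; for \<open>c\<close> not an eigenvalue of \<open>B\<close> the eigenvalues of \<open>B\<close>
  therefore form a sub-multiset of those of \<open>A\<close>. An eigenvector of \<open>B\<close> yields an
  eigenvector of \<open>A\<close> inside the span of the generalised eigenspaces of
  \<open>\<lambda>\<^sub>1, \<dots>, \<lambda>\<^sub>r\<close>, which forces its eigenvalue to be one of them; by the spectral gap
  the only sub-multiset of size \<open>r\<close> with this property is \<open>\<lambda>\<^sub>1, \<dots>, \<lambda>\<^sub>r\<close>.
\<close>

hide_const (open) Matrix.mat Determinant.det Matrix.vec Matrix.row
no_notation vec_index (infixl "$" 100)

definition idx :: "'n::finite \<Rightarrow> nat" where
  "idx = (SOME f. bij_betw f (UNIV::'n set) {0..<CARD('n)})"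

lemma idx_bij: "bij_betw (idx::'n::finite\<Rightarrow>nat) UNIV {0..<CARD('n)}"
proof -
  have "\<exists>f. bij_betw f (UNIV::'n set) {0..<CARD('n)}"
    using ex_bij_betw_finite_nat[of "UNIV::'n set"] by simp
  then show ?thesis unfolding idx_def by (rule someI_ex)
qed

definition ridx :: "nat \<Rightarrow> 'n::finite" where
  "ridx = inv_into UNIV idx"

lemma idx_less[simp]: "idx (i::'n::finite) < CARD('n)"
  using idx_bij[where 'n='n] by (auto simp: bij_betw_def)

lemma idx_inj: "inj (idx :: 'n::finite \<Rightarrow> nat)"
  using idx_bij[where 'n='n] by (auto simp: bij_betw_def)

lemma ridx_idx[simp]: "ridx (idx (i::'n::finite)) = i"
  unfolding ridx_def by (rule inv_f_f[OF idx_inj])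

lemma idx_ridx[simp]: "k < CARD('n) \<Longrightarrow> idx (ridx k :: 'n::finite) = k"
  unfolding ridx_def using idx_bij[where 'n='n]
  by (metis atLeastLessThan_iff bij_betw_inv_into_right zero_le)

lemma ridx_eq_iff[simp]:
  "i < CARD('n) \<Longrightarrow> j < CARD('n) \<Longrightarrow> (ridx i :: 'n::finite) = ridx j \<longleftrightarrow> i = j"
  by (metis idx_ridx)

lemma ridx_bij: "bij_betw (ridx :: nat \<Rightarrow> 'n::finite) {0..<CARD('n)} UNIV"
  unfolding ridx_def by (rule bij_betw_inv_into[OF idx_bij])

lemma sum_idx: "(\<Sum>k\<in>{0..<CARD('n)}. f k) = (\<Sum>i\<in>(UNIV::'n::finite set). f (idx i))"
  by (rule sum.reindex_bij_betw[OF idx_bij, symmetric])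

lemma prod_idx: "(\<Prod>k\<in>{0..<CARD('n)}. f k) = (\<Prod>i\<in>(UNIV::'n::finite set). f (idx i))"
  by (rule prod.reindex_bij_betw[OF idx_bij, symmetric])

definition to_mat :: "'a^'m::finite^'n::finite \<Rightarrow> 'a mat" where
  "to_mat A = Matrix.mat CARD('n) CARD('m) (\<lambda>(i,j). A $ ridx i $ ridx j)"

definition of_mat :: "'a mat \<Rightarrow> 'a^'m::finite^'n::finite" where
  "of_mat M = (\<chi> i j. M $$ (idx i, idx j))"

lemma to_mat_carrier[simp]: "to_mat (A::'a^'m::finite^'n::finite) \<in> carrier_mat CARD('n) CARD('m)"
  unfolding to_mat_def by simp

lemma dim_to_mat[simp]: "dim_row (to_mat (A::'a^'m::finite^'n::finite)) = CARD('n)"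
  "dim_col (to_mat (A::'a^'m::finite^'n::finite)) = CARD('m)"
  unfolding to_mat_def by simp_all

lemma index_to_mat[simp]: "i < CARD('n) \<Longrightarrow> j < CARD('m) \<Longrightarrow>
   to_mat (A::'a^'m::finite^'n::finite) $$ (i,j) = A $ ridx i $ ridx j"
  unfolding to_mat_def by simp

lemma of_to_mat[simp]: "of_mat (to_mat A) = A"
  unfolding of_mat_def by (simp add: vec_eq_iff)

lemma to_mat_inj: "to_mat A = to_mat B \<Longrightarrow> A = B"
  by (metis of_to_mat)

lemma to_mat_mult: "to_mat ((A::'a::semiring_1^'m::finite^'n::finite) ** (B::'a^'k::finite^'m)) = to_mat A * to_mat B"
proof (intro eq_matI)
  fix i j assume "i < dim_row (to_mat A * to_mat B)" and "j < dim_col (to_mat A * to_mat B)"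
  hence i: "i < CARD('n)" and j: "j < CARD('k)" by auto
  have "(to_mat A * to_mat B) $$ (i,j) = (\<Sum>l\<in>{0..<CARD('m)}. A $ ridx i $ ridx l * B $ ridx l $ ridx j)"
    using i j by (simp add: scalar_prod_def Matrix.row_def col_def)
  also have "\<dots> = (\<Sum>l\<in>UNIV. A $ ridx i $ l * B $ l $ ridx j)"
    by (subst sum_idx) simp
  finally show "to_mat (A ** B) $$ (i, j) = (to_mat A * to_mat B) $$ (i, j)"
    using i j by (simp add: matrix_matrix_mult_def)
qed auto

lemma to_mat_add: "to_mat ((A::'a::plus^'m::finite^'n::finite) + B) = to_mat A + to_mat B"
  by (intro eq_matI) auto

lemma to_mat_one: "to_mat (mat 1 :: 'a::{zero,one}^'n::finite^'n) = 1\<^sub>m CARD('n)"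
  by (intro eq_matI) (auto simp: Finite_Cartesian_Product.mat_def)

lemma pow_mat_Suc_left:
  assumes "(A :: 'a :: semiring_1 mat) \<in> carrier_mat n n"
  shows "A ^\<^sub>m Suc k = A * A ^\<^sub>m k"
proof (induction k)
  case 0 then show ?case using assms by simp
next
  case (Suc k)
  have "A ^\<^sub>m Suc (Suc k) = (A * A ^\<^sub>m k) * A" using Suc by simp
  also have "\<dots> = A * (A ^\<^sub>m k * A)" using assms by (intro assoc_mult_mat) auto
  finally show ?case by simp
qed

lemma to_mat_matpow: "to_mat (matpow (A::'a::comm_ring_1^'n::finite^'n) k) = to_mat A ^\<^sub>m k"
proof (induction k)
  case 0 then show ?case by (simp add: to_mat_one)
next
  case (Suc k)
  have "to_mat (matpow A (Suc k)) = to_mat A * to_mat A ^\<^sub>m k"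
    by (simp add: to_mat_mult Suc)
  also have "\<dots> = to_mat A ^\<^sub>m k * to_mat A"
    by (metis pow_mat.simps(2) pow_mat_Suc_left to_mat_carrier)
  finally show ?case by simp
qed

lemma map_permutation_idx_bij:
  "bij_betw (map_permutation (UNIV::'n::finite set) idx)
     {p. p permutes (UNIV::'n set)} {q. q permutes {0..<CARD('n)}}"
proof (rule bij_betw_byWitness[where f'="map_permutation {0..<CARD('n)} (ridx :: nat \<Rightarrow> 'n)"])
  show "\<forall>p\<in>{p. p permutes (UNIV::'n set)}.
      map_permutation {0..<CARD('n)} ridx (map_permutation UNIV idx p) = p"
    by (auto intro!: map_permutation_compose_inv idx_bij)
  show "\<forall>q\<in>{q. q permutes {0..<CARD('n)}}.
      map_permutation UNIV idx (map_permutation {0..<CARD('n)} (ridx :: nat \<Rightarrow> 'n) q) = q"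
    by (auto intro!: map_permutation_compose_inv ridx_bij)
qed (auto intro!: map_permutation_permutes idx_bij ridx_bij)

lemma det_to_mat: "Determinant.det (to_mat (A::'a::comm_ring_1^'n::finite^'n)) = det A"
proof -
  let ?n = "CARD('n)"
  let ?P = "{p. p permutes (UNIV::'n set)}"
  let ?Q = "{q. q permutes {0..<?n}}"
  define \<phi> where "\<phi> = map_permutation (UNIV::'n set) idx"
  have bij: "bij_betw \<phi> ?P ?Q"
    unfolding \<phi>_def by (rule map_permutation_idx_bij)
  have "Determinant.det (to_mat A) = (\<Sum>q\<in>?Q. signof q * (\<Prod>i = 0..<?n. to_mat A $$ (i, q i)))"
    unfolding Determinant.det_def by simp
  also have "\<dots> = (\<Sum>p\<in>?P. signof (\<phi> p) * (\<Prod>i = 0..<?n. to_mat A $$ (i, \<phi> p i)))"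
    by (rule sum.reindex_bij_betw[OF bij, symmetric])
  also have "\<dots> = (\<Sum>p\<in>?P. of_int (sign p) * (\<Prod>x\<in>UNIV. A $ x $ p x))"
  proof (rule sum.cong[OF refl])
    fix p assume p: "p \<in> ?P"
    have s: "sign (\<phi> p) = sign p" unfolding \<phi>_def
      by (rule sign_map_permutation) (use p idx_inj in auto)
    have "(\<Prod>i = 0..<?n. to_mat A $$ (i, \<phi> p i)) = (\<Prod>x\<in>(UNIV::'n set). to_mat A $$ (idx x, \<phi> p (idx x)))"
      by (rule prod_idx)
    also have "\<dots> = (\<Prod>x\<in>UNIV. A $ x $ p x)"
    proof (rule prod.cong[OF refl])
      fix x
      have "\<phi> p (idx x) = idx (p x)" unfolding \<phi>_def
        by (rule map_permutation_apply) (use idx_inj in auto)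
      then show "to_mat A $$ (idx x, \<phi> p (idx x)) = A $ x $ p x" by simp
    qed
    finally show "signof (\<phi> p) * (\<Prod>i = 0..<?n. to_mat A $$ (i, \<phi> p i)) = of_int (sign p) * (\<Prod>x\<in>UNIV. A $ x $ p x)"
      using s by simp
  qed
  also have "\<dots> = det A" unfolding Determinants.det_def by simp
  finally show ?thesis .
qed



lemma det_add_mult_mat_intertwine:
  fixes X :: "'a::idom mat"
  assumes X: "X \<in> carrier_mat n n" and Y: "Y \<in> carrier_mat r r"
    and U: "U \<in> carrier_mat n r" and K: "K \<in> carrier_mat r n"
    and XU: "X * U = U * Y"
  shows "Determinant.det (X + U * K) * Determinant.det Y = Determinant.det X * Determinant.det (K * U + Y)"
proof -
  define M where "M = four_block_mat X (U * Y) (- K) Y"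
  define T where "T = four_block_mat (1\<^sub>m n) (- U) (0\<^sub>m r n) (1\<^sub>m r)"
  have UY: "U * Y \<in> carrier_mat n r" using U Y by simp
  have mK: "- K \<in> carrier_mat r n" using K by simp
  have mU: "- U \<in> carrier_mat n r" using U by simp
  have M: "M \<in> carrier_mat (n + r) (n + r)" unfolding M_def using X Y by simp
  have T: "T \<in> carrier_mat (n + r) (n + r)" unfolding T_def by simp
  have MT: "M * T = four_block_mat X (0\<^sub>m n r) (- K) (K * U + Y)"
  proof -
    have "X * - U + U * Y * 1\<^sub>m r = 0\<^sub>m n r"
      using X U Y XU by (simp add: mult_minus_distrib_mat uminus_l_inv_mat)
    moreover have "- K * - U + Y * 1\<^sub>m r = K * U + Y"
      using K U Y by simp
    ultimately show ?thesis
      unfolding M_def T_def using X Y U K UY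
      by (simp add: mult_four_block_mat[OF X UY mK Y one_carrier_mat mU zero_carrier_mat one_carrier_mat])
  qed
  have TM: "T * M = four_block_mat (X + U * K) (0\<^sub>m n r) (- K) Y"
  proof -
    have "1\<^sub>m n * (U * Y) + - U * Y = 0\<^sub>m n r"
      using U Y UY comm_add_mat[OF UY uminus_carrier_mat[OF UY]] by (simp add: uminus_l_inv_mat)
    then show ?thesis
      unfolding M_def T_def using X Y U K UY
      by (simp add: mult_four_block_mat[OF one_carrier_mat mU zero_carrier_mat one_carrier_mat X UY mK Y])
  qed
  have "Determinant.det T = 1" unfolding T_def
    by (subst det_four_block_mat_lower_left_zero[OF one_carrier_mat mU refl one_carrier_mat]) simp
  then have "Determinant.det (M * T) = Determinant.det (T * M)"
    using det_mult[OF M T] det_mult[OF T M] by simp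
  moreover have "Determinant.det (M * T) = Determinant.det X * Determinant.det (K * U + Y)"
    unfolding MT using K U Y by (intro det_four_block_mat_upper_right_zero[OF X refl mK]) auto
  moreover have "Determinant.det (T * M) = Determinant.det (X + U * K) * Determinant.det Y"
    unfolding TM using X U K by (intro det_four_block_mat_upper_right_zero[OF _ refl mK Y]) auto
  ultimately show ?thesis by simp
qed

lemma det_add_mult_intertwine:
  fixes X :: "'a::idom^'n::finite^'n" and Y :: "'a^'r::finite^'r" and U :: "'a^'r^'n" and K :: "'a^'n^'r"
  assumes "X ** U = U ** Y"
  shows "det (X + U ** K) * det Y = det X * det (K ** U + Y)"
proof -
  have "to_mat X * to_mat U = to_mat U * to_mat Y" using assms by (metis to_mat_mult)
  from det_add_mult_mat_intertwine[OF to_mat_carrier to_mat_carrier to_mat_carrier to_mat_carrier this]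
  show ?thesis by (simp add: det_to_mat[symmetric] to_mat_add to_mat_mult)
qed

section \<open>Characteristic polynomials\<close>

lemma mat_eqI: assumes "\<And>i j. A $ i $ j = B $ i $ j" shows "A = B"
  using assms by (simp add: Finite_Cartesian_Product.vec_eq_iff)

lemma matrix_sub_rdistrib: "((A::'a::ring_1^'m::finite^'n::finite) - B) ** (C::'a^'k::finite^'m) = A ** C - B ** C"
  unfolding matrix_matrix_mult_def by (vector sum_subtractf left_diff_distrib)

lemma matrix_sub_ldistrib: "(A::'a::ring_1^'m::finite^'n::finite) ** ((B::'a^'k::finite^'m) - C) = A ** B - A ** C"
  unfolding matrix_matrix_mult_def by (vector sum_subtractf right_diff_distrib)

lemma mat_mult_left: "mat c ** (A::'a::comm_semiring_1^'m::finite^'n::finite) = (\<chi> i j. c * A $ i $ j)"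
  by (rule mat_eqI) (simp add: matrix_matrix_mult_def Finite_Cartesian_Product.mat_def if_distrib[where f="\<lambda>x. x * _"] cong: if_cong)

lemma mat_mult_right: "(A::'a::comm_semiring_1^'m::finite^'n::finite) ** mat c = (\<chi> i j. c * A $ i $ j)"
  by (rule mat_eqI) (simp add: matrix_matrix_mult_def Finite_Cartesian_Product.mat_def if_distrib[where f="\<lambda>x. _ * x"] mult.commute cong: if_cong)

lemma mat_commute: "mat c ** (A::'a::comm_semiring_1^'n::finite^'n) = A ** mat c"
  by (simp add: mat_mult_left mat_mult_right)

lemma scaleR_matrix_mult_left: "(c *\<^sub>R (X::real^'m::finite^'n::finite)) ** (Y::real^'k::finite^'m) = c *\<^sub>R (X ** Y)"
  by (rule mat_eqI) (simp add: matrix_matrix_mult_def sum_distrib_left mult.assoc)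

lemma scaleR_matrix_mult_right: "(X::real^'m::finite^'n::finite) ** (c *\<^sub>R (Y::real^'k::finite^'m)) = c *\<^sub>R (X ** Y)"
  by (rule mat_eqI) (simp add: matrix_matrix_mult_def sum_distrib_left mult.left_commute)

definition const_poly_mat :: "real^'m::finite^'n::finite \<Rightarrow> complex poly^'m^'n" where
  "const_poly_mat M = (\<chi> i j. [:complex_of_real (M $ i $ j):])"

lemma const_poly_mat_mult:
  "const_poly_mat ((A::real^'m::finite^'n::finite) ** (B::real^'k::finite^'m)) = const_poly_mat A ** const_poly_mat B"
  by (rule mat_eqI) (simp add: const_poly_mat_def matrix_matrix_mult_def sum_to_poly[symmetric] mult.commute)

lemma const_poly_mat_diff: "const_poly_mat ((A::real^'m::finite^'n::finite) - B) = const_poly_mat A - const_poly_mat B"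
  by (rule mat_eqI) (simp add: const_poly_mat_def)

lemma charpoly_const_poly_mat: "charpoly (M::real^'n::finite^'n) = det (mat [:0,1:] - const_poly_mat M)"
  unfolding charpoly_def const_poly_mat_def
  by (rule arg_cong[where f=det]) (vector Finite_Cartesian_Product.mat_def)

lemma charpoly_diff_mult_intertwine:
  fixes X :: "real^'n::finite^'n" and Y :: "real^'r::finite^'r" and U :: "real^'r^'n" and K :: "real^'n^'r"
  assumes XU: "X ** U = U ** Y"
  shows "charpoly (X - U ** K) * charpoly Y = charpoly X * charpoly (Y - K ** U)"
proof -
  define z :: "complex poly" where "z = [:0,1:]"
  let ?P = const_poly_mat
  have "(mat z - ?P X) ** ?P U = mat z ** ?P U - ?P (X ** U)"
    by (simp add: matrix_sub_rdistrib const_poly_mat_mult)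
  also have "\<dots> = ?P U ** mat z - ?P (U ** Y)" using XU by (simp add: mat_mult_left mat_mult_right)
  also have "\<dots> = ?P U ** (mat z - ?P Y)" by (simp add: matrix_sub_ldistrib const_poly_mat_mult)
  finally have "det (mat z - ?P X + ?P U ** ?P K) * det (mat z - ?P Y) =
        det (mat z - ?P X) * det (?P K ** ?P U + (mat z - ?P Y))"
    by (rule det_add_mult_intertwine)
  moreover have "mat z - ?P X + ?P U ** ?P K = mat z - ?P (X - U ** K)"
    by (simp add: const_poly_mat_diff const_poly_mat_mult)
  moreover have "?P K ** ?P U + (mat z - ?P Y) = mat z - ?P (Y - K ** U)"
    by (simp add: const_poly_mat_diff const_poly_mat_mult)
  ultimately show ?thesis unfolding charpoly_const_poly_mat z_def by simp
qed

lemma cmat_index: "cmat M $ i $ j = complex_of_real (M $ i $ j)"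
  by (simp add: cmat_def)

lemma cmat_mult: "cmat ((A::real^'m::finite^'n::finite) ** (B::real^'k::finite^'m)) = cmat A ** cmat B"
  by (rule mat_eqI) (simp add: cmat_def matrix_matrix_mult_def)

lemma cmat_one: "cmat (mat 1 :: real^'n::finite^'n) = mat 1"
  by (rule mat_eqI) (simp add: cmat_def Finite_Cartesian_Product.mat_def)

lemma cmat_inj: assumes "cmat A = cmat B" shows "A = B"
proof (rule mat_eqI)
  fix i j show "A $ i $ j = B $ i $ j"
    using arg_cong[OF assms, of "\<lambda>M. M $ i $ j"] by (simp add: cmat_def)
qed

lemma cmat_matpow: "cmat (matpow (A::real^'n::finite^'n) k) = matpow (cmat A) k"
  by (induction k) (simp_all add: cmat_one cmat_mult)

lemma charpoly_char_poly: "charpoly (M::real^'n::finite^'n) = char_poly (to_mat (cmat M))"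
proof -
  have "char_poly_matrix (to_mat (cmat M)) =
     to_mat (\<chi> i j. (if i = j then [:0,1:] else 0) - [:complex_of_real (M $ i $ j):])"
    by (intro eq_matI) (auto simp: char_poly_matrix_def cmat_def)
  then show ?thesis by (simp add: char_poly_def charpoly_def det_to_mat)
qed

lemma lead_coeff_charpoly: "lead_coeff (charpoly (M::real^'n::finite^'n)) = 1"
  and degree_charpoly: "degree (charpoly (M::real^'n::finite^'n)) = CARD('n)"
  using degree_monic_char_poly[OF to_mat_carrier[of "cmat M"]] by (simp_all add: charpoly_char_poly)

lemma charpoly_nonzero: "charpoly (M::real^'n::finite^'n) \<noteq> 0"
  using lead_coeff_charpoly[of M] by auto

lemma charpoly_scalar: "charpoly (c *\<^sub>R mat 1 :: real^'r::finite^'r) = [:- complex_of_real c, 1:] ^ CARD('r)"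
  unfolding charpoly_def by (subst det_diagonal) (auto simp: Finite_Cartesian_Product.mat_def)

lemma charpoly_deflation:
  fixes X :: "real^'n::finite^'n" and Y :: "real^'r::finite^'r" and U :: "real^'r^'n" and K :: "real^'n^'r"
  assumes "X ** U = U ** Y" and "charpoly X = charpoly Y * T"
  shows "charpoly (X - U ** K) = charpoly (Y - K ** U) * T"
proof -
  have "charpoly Y * charpoly (X - U ** K) = charpoly Y * (charpoly (Y - K ** U) * T)"
    using charpoly_diff_mult_intertwine[OF assms(1), of K] assms(2) by (simp add: ac_simps)
  then show ?thesis using charpoly_nonzero[of Y] by simp
qed

section \<open>The matrix exponential and its eigenvalues\<close>

lemma index_mult_mat_sum:
  assumes "i < dim_row A" "j < dim_col B" "dim_col A = dim_row B"
  shows "(A * B) $$ (i,j) = (\<Sum>l<dim_row B. A $$ (i,l) * B $$ (l,j))"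
  using assms by (auto simp: scalar_prod_def atLeast0LessThan intro!: sum.cong)

lemma upper_triangular_mult:
  fixes A B :: "'a::semiring_0 mat"
  assumes A: "A \<in> carrier_mat n n" and B: "B \<in> carrier_mat n n"
    and uA: "upper_triangular A" and uB: "upper_triangular B"
  shows "upper_triangular (A * B)"
    and "i < n \<Longrightarrow> (A * B) $$ (i,i) = A $$ (i,i) * B $$ (i,i)"
proof -
  have zA: "A $$ (i,l) = 0" if "l < i" "i < n" for i l using uA A that by auto
  have zB: "B $$ (l,j) = 0" if "j < l" "l < n" for l j using uB B that by auto
  have entry: "(A * B) $$ (i,j) = (\<Sum>l<n. A $$ (i,l) * B $$ (l,j))" if "i < n" "j < n" for i j
    using that A B by (simp add: index_mult_mat_sum del: index_mult_mat(1))
  show "upper_triangular (A * B)"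
  proof (rule upper_triangularI)
    fix i j assume ji: "j < i" and "i < dim_row (A * B)"
    then have i: "i < n" using A by simp
    have "A $$ (i,l) * B $$ (l,j) = 0" if "l < n" for l
      using zA[of l i] zB[of j l] ji i that by (cases "l < i") auto
    then show "(A * B) $$ (i,j) = 0" using entry[of i j] ji i by simp
  qed
  show "(A * B) $$ (i,i) = A $$ (i,i) * B $$ (i,i)" if i: "i < n"
  proof -
    have "(\<Sum>l<n. A $$ (i,l) * B $$ (l,i)) = (\<Sum>l<n. if l = i then A $$ (i,i) * B $$ (i,i) else 0)"
      using zA[of _ i] zB[of i] i by (intro sum.cong) (auto simp: linorder_neq_iff)
    then show ?thesis using entry[of i i] i by simp
  qed
qed

lemma upper_triangular_pow_mat:
  fixes A :: "'a::comm_semiring_1 mat"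
  assumes A: "A \<in> carrier_mat n n" and uA: "upper_triangular A"
  shows "upper_triangular (A ^\<^sub>m k) \<and> (\<forall>i<n. (A ^\<^sub>m k) $$ (i,i) = A $$ (i,i) ^ k)"
proof (induction k)
  case 0 then show ?case using A by auto
next
  case (Suc k)
  have "A ^\<^sub>m k \<in> carrier_mat n n" using A by simp
  from upper_triangular_mult[OF this A _ uA] Suc show ?case by (simp add: mult.commute)
qed

lemma pow_mat_entry_bound:
  fixes M :: "'a::real_normed_field mat"
  assumes M: "M \<in> carrier_mat n n" and i: "i < n"
  shows "j < n \<Longrightarrow> norm ((M ^\<^sub>m k) $$ (i,j)) \<le> (\<Sum>a<n. \<Sum>b<n. norm (M $$ (a,b))) ^ k"
proof (induction k arbitrary: j)
  case 0 then show ?case using M i by simp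
next
  case (Suc k)
  define b where "b = (\<Sum>a<n. \<Sum>b<n. norm (M $$ (a,b)))"
  have "norm ((M ^\<^sub>m Suc k) $$ (i,j)) = norm (\<Sum>l<n. (M ^\<^sub>m k) $$ (i,l) * M $$ (l,j))"
    using M i Suc.prems by (simp add: index_mult_mat_sum del: index_mult_mat(1))
  also have "\<dots> \<le> (\<Sum>l<n. norm ((M ^\<^sub>m k) $$ (i,l)) * norm (M $$ (l,j)))"
    by (rule order_trans[OF norm_sum]) (simp add: norm_mult)
  also have "\<dots> \<le> (\<Sum>l<n. b ^ k * norm (M $$ (l,j)))"
    by (intro sum_mono mult_right_mono) (auto simp: Suc.IH b_def)
  also have "\<dots> = b ^ k * (\<Sum>l<n. norm (M $$ (l,j)))"
    by (simp add: sum_distrib_left)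
  also have "\<dots> \<le> b ^ k * b"
  proof (intro mult_left_mono)
    show "(\<Sum>l<n. norm (M $$ (l,j))) \<le> b" unfolding b_def
      using Suc.prems by (intro sum_mono member_le_sum) auto
  qed (simp add: b_def sum_nonneg)
  finally show ?case by (simp add: b_def mult.commute)
qed

lemma summable_pow_mat_entry:
  fixes M :: "'a::{real_normed_field,banach} mat"
  assumes "M \<in> carrier_mat n n" "i < n" "j < n"
  shows "summable (\<lambda>k. (M ^\<^sub>m k) $$ (i,j) / fact k)"
proof (rule summable_comparison_test'[OF summable_exp[of "\<Sum>a<n. \<Sum>b<n. norm (M $$ (a,b))"]])
  fix k :: nat
  have "norm ((M ^\<^sub>m k) $$ (i,j) / fact k) = norm ((M ^\<^sub>m k) $$ (i,j)) / fact k"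
    by (simp add: norm_divide)
  also have "\<dots> \<le> (\<Sum>a<n. \<Sum>b<n. norm (M $$ (a,b))) ^ k / fact k"
    using pow_mat_entry_bound[OF assms, of k] by (simp add: divide_right_mono)
  finally show "norm ((M ^\<^sub>m k) $$ (i,j) / fact k) \<le> inverse (fact k) * (\<Sum>a<n. \<Sum>b<n. norm (M $$ (a,b))) ^ k"
    by (simp add: divide_inverse mult.commute)
qed

definition exp_mat :: "'a::{real_normed_field,banach} mat \<Rightarrow> 'a mat" where
  "exp_mat M = Matrix.mat (dim_row M) (dim_row M) (\<lambda>(i,j). \<Sum>k. (M ^\<^sub>m k) $$ (i,j) / fact k)"

lemma exp_mat_carrier[simp]: "exp_mat M \<in> carrier_mat (dim_row M) (dim_row M)"
  unfolding exp_mat_def by simp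

lemma dim_exp_mat[simp]: "dim_row (exp_mat M) = dim_row M" "dim_col (exp_mat M) = dim_row M"
  unfolding exp_mat_def by simp_all

lemma pow_mat_intertwine:
  assumes X: "X \<in> carrier_mat n n" and Y: "Y \<in> carrier_mat m m" and U: "U \<in> carrier_mat n m"
    and XU: "X * U = U * Y"
  shows "X ^\<^sub>m k * U = U * Y ^\<^sub>m k"
proof (induction k)
  case 0 then show ?case using X Y U by simp
next
  case (Suc k)
  have Xk: "X ^\<^sub>m k \<in> carrier_mat n n" and Yk: "Y ^\<^sub>m k \<in> carrier_mat m m" using X Y by auto
  have "X ^\<^sub>m Suc k * U = X ^\<^sub>m k * (X * U)" using assoc_mult_mat[OF Xk X U] by simp
  also have "\<dots> = (X ^\<^sub>m k * U) * Y" unfolding XU using Xk U Y by simp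
  also have "\<dots> = U * Y ^\<^sub>m Suc k" unfolding Suc using assoc_mult_mat[OF U Yk Y] by simp
  finally show ?case .
qed

lemma exp_mat_intertwine:
  fixes X :: "'a::{real_normed_field,banach} mat"
  assumes X: "X \<in> carrier_mat n n" and Y: "Y \<in> carrier_mat m m" and U: "U \<in> carrier_mat n m"
    and XU: "X * U = U * Y"
  shows "exp_mat X * U = U * exp_mat Y"
proof (rule eq_matI)
  fix i j assume "i < dim_row (U * exp_mat Y)" "j < dim_col (U * exp_mat Y)"
  then have i: "i < n" and j: "j < m" using U Y by auto
  have sX: "summable (\<lambda>k. (X ^\<^sub>m k) $$ (i,l) / fact k)" if "l < n" for l
    using summable_pow_mat_entry[OF X i that] .
  have sY: "summable (\<lambda>k. (Y ^\<^sub>m k) $$ (l,j) / fact k)" if "l < m" for l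
    using summable_pow_mat_entry[OF Y that j] .
  have "(exp_mat X * U) $$ (i,j) = (\<Sum>l<n. (\<Sum>k. (X ^\<^sub>m k) $$ (i,l) / fact k) * U $$ (l,j))"
    using X U i j by (simp add: index_mult_mat_sum exp_mat_def del: index_mult_mat(1))
  also have "\<dots> = (\<Sum>l<n. \<Sum>k. (X ^\<^sub>m k) $$ (i,l) / fact k * U $$ (l,j))"
    using sX by (intro sum.cong refl suminf_mult2) auto
  also have "\<dots> = (\<Sum>k. \<Sum>l<n. (X ^\<^sub>m k) $$ (i,l) / fact k * U $$ (l,j))"
    using sX by (intro suminf_sum[symmetric] summable_mult2) auto
  also have "\<dots> = (\<Sum>k. (X ^\<^sub>m k * U) $$ (i,j) / fact k)"
    using X U i j by (simp add: index_mult_mat_sum sum_divide_distrib del: index_mult_mat(1))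
  also have "\<dots> = (\<Sum>k. (U * Y ^\<^sub>m k) $$ (i,j) / fact k)"
    by (simp add: pow_mat_intertwine[OF X Y U XU])
  also have "\<dots> = (\<Sum>k. \<Sum>l<m. U $$ (i,l) * ((Y ^\<^sub>m k) $$ (l,j) / fact k))"
    using Y U i j by (simp add: index_mult_mat_sum sum_divide_distrib del: index_mult_mat(1))
  also have "\<dots> = (\<Sum>l<m. \<Sum>k. U $$ (i,l) * ((Y ^\<^sub>m k) $$ (l,j) / fact k))"
    using sY by (intro suminf_sum summable_mult) auto
  also have "\<dots> = (\<Sum>l<m. U $$ (i,l) * (\<Sum>k. (Y ^\<^sub>m k) $$ (l,j) / fact k))"
    using sY by (intro sum.cong refl suminf_mult) auto
  also have "\<dots> = (U * exp_mat Y) $$ (i,j)"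
    using Y U i j by (simp add: index_mult_mat_sum exp_mat_def del: index_mult_mat(1))
  finally show "(exp_mat X * U) $$ (i,j) = (U * exp_mat Y) $$ (i,j)" .
qed (use X U Y in auto)

lemma exp_sums: "(\<lambda>k. z ^ k / fact k) sums exp (z::'a::{real_normed_field,banach})"
  using exp_converges[of z] by (simp add: scaleR_conv_of_real divide_inverse mult.commute)

lemma exp_mat_upper_triangular:
  fixes B :: "'a::{real_normed_field,banach} mat"
  assumes B: "B \<in> carrier_mat n n" and uB: "upper_triangular B"
  shows "upper_triangular (exp_mat B)" and "diag_mat (exp_mat B) = map exp (diag_mat B)"
proof -
  note Bk = upper_triangular_pow_mat[OF B uB]
  show "upper_triangular (exp_mat B)"
    using B Bk by (auto simp: exp_mat_def upper_triangular_def)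
  have "exp_mat B $$ (i,i) = exp (B $$ (i,i))" if "i < n" for i
    using B Bk that by (simp add: exp_mat_def sums_unique[OF exp_sums, symmetric])
  then show "diag_mat (exp_mat B) = map exp (diag_mat B)"
    using B by (simp add: diag_mat_def)
qed

lemma char_poly_exp_mat_smult:
  fixes A :: "complex mat"
  assumes A: "A \<in> carrier_mat n n" and cA: "char_poly A = (\<Prod>a\<leftarrow>as. [:- a, 1:])"
  shows "char_poly (exp_mat (c \<cdot>\<^sub>m A)) = (\<Prod>a\<leftarrow>as. [:- exp (a * c), 1:])"
proof -
  obtain B P Q where schur: "schur_decomposition A as = (B,P,Q)"
    by (cases "schur_decomposition A as") auto
  from schur_decomposition[OF A cA schur]
  have wit: "similar_mat_wit A B P Q" and uB: "upper_triangular B" and dB: "diag_mat B = as"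
    by auto
  note W = similar_mat_witD2[OF A wit]
  have B: "B \<in> carrier_mat n n" and P: "P \<in> carrier_mat n n" and Q: "Q \<in> carrier_mat n n"
    using W by auto
  have ucB: "upper_triangular (c \<cdot>\<^sub>m B)"
    using uB B by (auto simp: upper_triangular_def)
  have "A * P = P * B * (Q * P)"
    unfolding W(3) using assoc_mult_mat[OF mult_carrier_mat[OF P B] Q P] .
  then have "(c \<cdot>\<^sub>m A) * P = P * (c \<cdot>\<^sub>m B)"
    using W(2) A B P by (simp add: mult_smult_assoc_mat mult_smult_distrib)
  then have EP: "exp_mat (c \<cdot>\<^sub>m A) * P = P * exp_mat (c \<cdot>\<^sub>m B)"
    using A B P by (intro exp_mat_intertwine) auto
  have E: "exp_mat (c \<cdot>\<^sub>m A) \<in> carrier_mat n n" and F: "exp_mat (c \<cdot>\<^sub>m B) \<in> carrier_mat n n"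
    using A B by auto
  have "exp_mat (c \<cdot>\<^sub>m A) = exp_mat (c \<cdot>\<^sub>m A) * (P * Q)"
    using E W(1) by (simp add: right_mult_one_mat)
  also have "\<dots> = P * exp_mat (c \<cdot>\<^sub>m B) * Q"
    using assoc_mult_mat[OF E P Q] EP by simp
  finally have "similar_mat (exp_mat (c \<cdot>\<^sub>m A)) (exp_mat (c \<cdot>\<^sub>m B))"
    using E F P Q W(1,2) by (intro similar_matI[of _ _ P Q n]) auto
  then have "char_poly (exp_mat (c \<cdot>\<^sub>m A)) = char_poly (exp_mat (c \<cdot>\<^sub>m B))"
    by (rule char_poly_similar)
  also have "\<dots> = (\<Prod>a\<leftarrow>diag_mat (exp_mat (c \<cdot>\<^sub>m B)). [:- a, 1:])"
    using B ucB by (intro char_poly_upper_triangular[of _ n] exp_mat_upper_triangular) auto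
  also have "diag_mat (exp_mat (c \<cdot>\<^sub>m B)) = map (\<lambda>a. exp (a * c)) as"
    using B ucB dB by (subst exp_mat_upper_triangular[of _ n]) (auto simp: diag_mat_def mult.commute)
  finally show ?thesis by (simp add: o_def)
qed

lemma prod_lessThan_list: "(\<Prod>i<n. f i) = prod_list (map f [0..<n])"
  by (induction n) (auto simp: mult.commute)

lemma summable_matpow_entry:
  "summable (\<lambda>k. matpow (M::'a::{real_normed_field,banach}^'n::finite^'n) k $ i $ j / fact k)"
  using summable_pow_mat_entry[OF to_mat_carrier[of M], of "idx i" "idx j"]
  by (simp add: to_mat_matpow[symmetric])

lemma to_mat_cmat_scaleR: "to_mat (cmat (h *\<^sub>R X)) = complex_of_real h \<cdot>\<^sub>m to_mat (cmat X)"
  by (intro eq_matI) (auto simp: cmat_def)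

lemma to_mat_cmat_mexp: "to_mat (cmat (mexp X)) = exp_mat (to_mat (cmat (X::real^'n::finite^'n)))"
proof (rule eq_matI)
  fix a b assume "a < dim_row (exp_mat (to_mat (cmat X)))" "b < dim_col (exp_mat (to_mat (cmat X)))"
  then have a: "a < CARD('n)" and b: "b < CARD('n)" by auto
  have "to_mat (cmat (mexp X)) $$ (a,b) = complex_of_real (\<Sum>k. matpow X k $ ridx a $ ridx b / fact k)"
    using a b by (simp add: cmat_def mexp_def)
  also have "\<dots> = (\<Sum>k. complex_of_real (matpow X k $ ridx a $ ridx b / fact k))"
    by (rule suminf_of_real[OF summable_matpow_entry])
  also have "\<dots> = (\<Sum>k. (to_mat (cmat X) ^\<^sub>m k) $$ (a,b) / fact k)"
    using a b by (simp add: to_mat_matpow[symmetric] cmat_matpow[symmetric] cmat_index)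
  finally show "to_mat (cmat (mexp X)) $$ (a,b) = exp_mat (to_mat (cmat X)) $$ (a,b)"
    using a b by (simp add: exp_mat_def)
qed auto

lemma mexp_intertwine:
  fixes X :: "real^'n::finite^'n" and Y :: "real^'r::finite^'r" and U :: "real^'r^'n"
  assumes "X ** U = U ** Y"
  shows "mexp X ** U = U ** mexp Y"
proof -
  have "to_mat (cmat X) * to_mat (cmat U) = to_mat (cmat U) * to_mat (cmat Y)"
    using assms by (metis cmat_mult to_mat_mult)
  then have "exp_mat (to_mat (cmat X)) * to_mat (cmat U) = to_mat (cmat U) * exp_mat (to_mat (cmat Y))"
    by (intro exp_mat_intertwine) auto
  then show ?thesis
    by (intro cmat_inj to_mat_inj) (simp add: cmat_mult to_mat_mult to_mat_cmat_mexp)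
qed

lemma charpoly_mexp:
  fixes X :: "real^'n::finite^'n"
  assumes "charpoly X = (\<Prod>i<CARD('n). [:- mu i, 1:])"
  shows "charpoly (mexp (h *\<^sub>R X)) = (\<Prod>i<CARD('n). [:- exp (mu i * complex_of_real h), 1:])"
proof -
  have "char_poly (to_mat (cmat X)) = (\<Prod>a\<leftarrow>map mu [0..<CARD('n)]. [:- a, 1:])"
    using assms by (simp add: charpoly_char_poly prod_lessThan_list o_def)
  from char_poly_exp_mat_smult[OF to_mat_carrier this, of "complex_of_real h"] show ?thesis
    by (simp add: charpoly_char_poly to_mat_cmat_mexp to_mat_cmat_scaleR prod_lessThan_list o_def)
qed

section \<open>Invariant subspaces and generalised eigenvectors\<close>

definition cvec :: "real^'n::finite \<Rightarrow> complex^'n" where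
  "cvec x = (\<chi> i. complex_of_real (x $ i))"

definition Re_vec :: "complex^'n::finite \<Rightarrow> real^'n" where
  "Re_vec v = (\<chi> i. Re (v $ i))"

lemma cmat_cvec: "cmat M *v cvec x = cvec (M *v x)"
  by (simp add: Finite_Cartesian_Product.vec_eq_iff cmat_def cvec_def matrix_vector_mult_def)

lemma Re_vec_cmat: "Re_vec (cmat M *v v) = M *v Re_vec v"
  by (simp add: Finite_Cartesian_Product.vec_eq_iff cmat_def Re_vec_def matrix_vector_mult_def Re_sum)

lemma Re_vec_cvec[simp]: "Re_vec (cvec x) = x"
  by (simp add: Finite_Cartesian_Product.vec_eq_iff Re_vec_def cvec_def)

lemma matpow_commute:
  assumes "X ** Y = Y ** (X::'a::comm_ring_1^'n::finite^'n)"
  shows "matpow X k ** Y = Y ** matpow X k"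
proof (induction k)
  case 0 then show ?case by simp
next
  case (Suc k)
  have "matpow X (Suc k) ** Y = X ** (matpow X k ** Y)" by (simp add: matrix_mul_assoc)
  also have "\<dots> = (X ** Y) ** matpow X k" by (simp add: Suc matrix_mul_assoc)
  also have "\<dots> = Y ** matpow X (Suc k)" by (simp add: assms matrix_mul_assoc)
  finally show ?case .
qed

lemma matpow_add: "matpow (X::'a::comm_ring_1^'n::finite^'n) (a + b) = matpow X a ** matpow X b"
  by (induction a) (simp_all add: matrix_mul_assoc)

lemma commute_shift:
  assumes "Z ** M = M ** (Z::'a::comm_ring_1^'n::finite^'n)"
  shows "Z ** (M - mat c) = (M - mat c) ** Z"
  using assms by (simp add: matrix_sub_ldistrib matrix_sub_rdistrib mat_commute)

lemma gen_eigvecs_invariant: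
  assumes "v \<in> gen_eigvecs A \<mu>"
  shows "cmat A *v v \<in> gen_eigvecs A \<mu>"
proof -
  from assms obtain k where k: "matpow (cmat A - mat \<mu>) k *v v = 0"
    unfolding gen_eigvecs_def by auto
  have "matpow (cmat A - mat \<mu>) k ** cmat A = cmat A ** matpow (cmat A - mat \<mu>) k"
    by (intro matpow_commute commute_shift[symmetric]) simp
  then have "matpow (cmat A - mat \<mu>) k *v (cmat A *v v) = 0"
    using k by (metis matrix_vector_mul_assoc matrix_vector_mult_0_right)
  then show ?thesis unfolding gen_eigvecs_def by auto
qed

lemma span_invariant:
  fixes M :: "'a::field^'n::finite^'n"
  assumes v: "v \<in> vec.span S" and inv: "\<And>s. s \<in> S \<Longrightarrow> M *v s \<in> vec.span S"
  shows "M *v v \<in> vec.span S"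
  using v
proof (induction rule: vec.span_induct)
  case base
  show ?case
    by (rule vec.subspaceI)
       (auto simp: matrix_vector_right_distrib vector_scalar_commute intro: vec.span_add vec.span_scale vec.span_zero)
next
  case (step x)
  then show ?case using inv by simp
qed

lemma frame_intertwine:
  fixes A :: "real^'n::finite^'n" and U :: "real^'r::finite^'n"
  assumes U: "U \<in> frames A lam"
  shows "A ** U = U ** (transpose U ** A ** U)"
proof -
  let ?V = "vec.span (\<Union>i\<in>{..<CARD('r)}. gen_eigvecs A (lam i))"
  have UU: "transpose U ** U = mat 1" and rng: "range (\<lambda>c. cmat U *v c) = ?V"
    using U unfolding frames_def by auto
  have "(A ** U) *v x = (U ** (transpose U ** A ** U)) *v x" for x
  proof -
    have "cmat U *v cvec x \<in> ?V"
      using rng by blast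
    then have "cmat A *v (cmat U *v cvec x) \<in> ?V"
      by (rule span_invariant) (auto intro: vec.span_base gen_eigvecs_invariant)
    then obtain c where c: "cmat A *v (cmat U *v cvec x) = cmat U *v c"
      using rng by blast
    have "A *v (U *v x) = U *v Re_vec c"
      using arg_cong[OF c, of Re_vec] by (simp add: cmat_cvec Re_vec_cmat)
    moreover then have "Re_vec c = transpose U *v (A *v (U *v x))"
      using UU by (simp add: matrix_vector_mul_assoc)
    ultimately show ?thesis by (simp add: matrix_vector_mul_assoc matrix_mul_assoc)
  qed
  then show ?thesis by (simp add: matrix_eq)
qed

primrec eig_annihilator :: "'a::comm_ring_1^'n::finite^'n \<Rightarrow> (nat \<Rightarrow> 'a) \<Rightarrow> nat \<Rightarrow> nat \<Rightarrow> 'a^'n^'n" where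
  "eig_annihilator M l N 0 = mat 1"
| "eig_annihilator M l N (Suc m) = matpow (M - mat (l m)) N ** eig_annihilator M l N m"

lemma eig_annihilator_commute: "eig_annihilator M l N m ** M = M ** eig_annihilator M l N m"
proof (induction m)
  case (Suc m)
  have "matpow (M - mat (l m)) N ** M = M ** matpow (M - mat (l m)) N"
    by (intro matpow_commute commute_shift[symmetric]) simp
  with Suc show ?case by (simp add: matrix_mul_assoc[symmetric]) (simp add: matrix_mul_assoc)
qed simp

lemma eig_annihilator_gen_eigvec:
  assumes "j < m" and v: "matpow (M - mat (l j)) k *v v = 0" and "k \<le> N"
  shows "eig_annihilator M l N m *v v = 0"
  using assms(1)
proof (induction m)
  case (Suc m)
  show ?case
  proof (cases "j = m")
    case True
    let ?Q = "eig_annihilator M l N m"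
    have "matpow (M - mat (l j)) k ** ?Q = ?Q ** matpow (M - mat (l j)) k"
      by (intro matpow_commute commute_shift[symmetric] eig_annihilator_commute)
    then have "matpow (M - mat (l j)) k *v (?Q *v v) = 0"
      using v by (metis matrix_vector_mul_assoc matrix_vector_mult_0_right)
    then show ?thesis
      using True \<open>k \<le> N\<close> matpow_add[of "M - mat (l j)" "N - k" k]
      by (simp add: matrix_vector_mul_assoc[symmetric])
  next
    case False
    with Suc show ?thesis by (simp add: matrix_vector_mul_assoc[symmetric])
  qed
qed simp

lemma mat_vec_mult: "mat a *v (v::'a::comm_semiring_1^'n::finite) = a *s v"
  by (vector matrix_vector_mult_def Finite_Cartesian_Product.mat_def)
    (simp add: if_distrib if_distribR cong del: if_weak_cong)

lemma matpow_eigvec: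
  assumes "M *v w = a *s (w::'a::field^'n::finite)"
  shows "matpow (M - mat \<mu>) N *v w = ((a - \<mu>) ^ N) *s w"
proof (induction N)
  case (Suc N)
  have "matpow (M - mat \<mu>) (Suc N) *v w = ((a - \<mu>) ^ N) *s ((M - mat \<mu>) *v w)"
    by (simp add: matrix_vector_mul_assoc[symmetric] Suc vector_scalar_commute)
  also have "(M - mat \<mu>) *v w = (a - \<mu>) *s w"
    using assms by (simp add: matrix_vector_mult_diff_rdistrib mat_vec_mult vector_sub_rdistrib)
  finally show ?case by (simp only: vector_smult_assoc power_Suc2)
qed simp

lemma eig_annihilator_eigvec:
  assumes "M *v w = a *s (w::'a::field^'n::finite)"
  shows "eig_annihilator M l N m *v w = (\<Prod>i<m. (a - l i) ^ N) *s w"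
  by (induction m)
    (simp_all add: matrix_vector_mul_assoc[symmetric] vector_scalar_commute matpow_eigvec[OF assms] mult.commute)

lemma eigenvalue_of_eigvec_in_span_gen_eigvecs:
  fixes A :: "real^'n::finite^'n" and lam :: "nat \<Rightarrow> complex"
  assumes w: "w \<in> vec.span (\<Union>i\<in>{..<m}. gen_eigvecs A (lam i))" and "w \<noteq> 0"
    and eig: "cmat A *v w = a *s w"
  shows "\<exists>i<m. a = lam i"
proof -
  define W where "W = {v. \<exists>N0. \<forall>N\<ge>N0. eig_annihilator (cmat A) lam N m *v v = 0}"
  have "vec.subspace W"
  proof (rule vec.subspaceI)
    fix x y assume "x \<in> W" "y \<in> W"
    then obtain N1 N2 where "\<forall>N\<ge>N1. eig_annihilator (cmat A) lam N m *v x = 0"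
      and "\<forall>N\<ge>N2. eig_annihilator (cmat A) lam N m *v y = 0"
      unfolding W_def by auto
    then have "\<forall>N\<ge>max N1 N2. eig_annihilator (cmat A) lam N m *v (x + y) = 0"
      by (simp add: matrix_vector_right_distrib)
    then show "x + y \<in> W" unfolding W_def by blast
  qed (auto simp: W_def vector_scalar_commute)
  moreover have "gen_eigvecs A (lam j) \<subseteq> W" if "j < m" for j
    using eig_annihilator_gen_eigvec[OF that] unfolding W_def gen_eigvecs_def by blast
  ultimately have "w \<in> W"
    using w vec.span_minimal[of "\<Union>i\<in>{..<m}. gen_eigvecs A (lam i)" W] by blast
  then obtain N where "eig_annihilator (cmat A) lam N m *v w = 0"
    unfolding W_def by auto
  then have "(\<Prod>i<m. (a - lam i) ^ N) *s w = 0"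
    using eig_annihilator_eigvec[OF eig] by simp
  then show ?thesis using \<open>w \<noteq> 0\<close> by (auto simp: vector_mul_eq_0)
qed

section \<open>The spectrum of the compression to an invariant frame\<close>

lemma poly_det: "poly (det (M::'a::comm_ring_1 poly^'n::finite^'n)) a = det (\<chi> i j. poly (M $ i $ j) a)"
  unfolding Determinants.det_def by (simp add: poly_sum poly_prod)

lemma charpoly_root_eigvec:
  fixes M :: "real^'n::finite^'n"
  assumes "poly (charpoly M) a = 0"
  shows "\<exists>v. v \<noteq> 0 \<and> cmat M *v v = a *s v"
proof -
  have "poly (charpoly M) a = det (mat a - cmat M)"
    unfolding charpoly_def poly_det
    by (rule arg_cong[where f=det], rule mat_eqI) (simp add: Finite_Cartesian_Product.mat_def cmat_def)
  then have "\<not> inj (\<lambda>x. (mat a - cmat M) *v x)"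
    using assms det_nz_iff_inj_gen[OF matrix_vector_mul_linear_gen[of "mat a - cmat M"]] by simp
  then obtain x y where "x \<noteq> y" and xy: "(mat a - cmat M) *v x = (mat a - cmat M) *v y"
    unfolding inj_def by blast
  then have "(mat a - cmat M) *v (x - y) = 0"
    by (simp add: matrix_vector_mult_diff_distrib)
  then have "cmat M *v (x - y) = a *s (x - y)"
    by (simp add: matrix_vector_mult_diff_rdistrib mat_vec_mult)
  then show ?thesis using \<open>x \<noteq> y\<close> by (intro exI[of _ "x - y"]) simp
qed

lemma charpoly_eq_prod_proots: "charpoly M = (\<Prod>a\<in>#proots (charpoly M). [:- a, 1:])"
  using complex_poly_decompose_multiset[of "charpoly M"] by (simp add: lead_coeff_charpoly)

lemma proots_linear_factors: "proots (\<Prod>a\<leftarrow>as. [:- a, 1:]) = mset (as::'a::idom list)"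
proof (induction as)
  case (Cons a as)
  have "(\<Prod>a\<leftarrow>as. [:- a, 1:]) \<noteq> 0"
    by (auto simp: prod_list_zero_iff)
  then show ?case using Cons by (simp add: proots_mult del: mult_pCons_left)
qed simp

lemma proots_charpoly_subseteq_intertwine:
  fixes X :: "real^'n::finite^'n" and Y :: "real^'r::finite^'r" and U :: "real^'r^'n" and L :: "real^'n^'r"
  assumes XU: "X ** U = U ** Y" and LU: "L ** U = mat 1"
  shows "proots (charpoly Y) \<subseteq># proots (charpoly X)"
proof -
  obtain c :: real where c: "c \<notin> Re ` set_mset (proots (charpoly Y))"
    using ex_new_if_finite[OF infinite_UNIV_char_0, of "Re ` set_mset (proots (charpoly Y))"] by auto
  define K where "K = L ** X - c *\<^sub>R L"
  have "K ** U = L ** (X ** U) - c *\<^sub>R (L ** U)"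
    by (simp add: K_def matrix_sub_rdistrib scaleR_matrix_mult_left matrix_mul_assoc)
  also have "\<dots> = Y - c *\<^sub>R mat 1"
    by (simp add: XU LU matrix_mul_assoc)
  finally have "Y - K ** U = c *\<^sub>R mat 1"
    by simp
  then have "charpoly (X - U ** K) * charpoly Y = charpoly X * [:- complex_of_real c, 1:] ^ CARD('r)"
    using charpoly_diff_mult_intertwine[OF XU, of K] by (simp add: charpoly_scalar)
  from arg_cong[OF this, of proots]
  have eq: "proots (charpoly (X - U ** K)) + proots (charpoly Y) =
      proots (charpoly X) + repeat_mset CARD('r) {#complex_of_real c#}"
    by (simp add: proots_mult proots_power charpoly_nonzero)
  have count: "count (proots (charpoly (X - U ** K))) x + count (proots (charpoly Y)) x =
      count (proots (charpoly X)) x + (if x = complex_of_real c then CARD('r) else 0)" for x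
    using arg_cong[OF eq, of "\<lambda>M. count M x"] by simp
  have "complex_of_real c \<notin># proots (charpoly Y)"
    using c by (metis Re_complex_of_real image_eqI)
  then have "count (proots (charpoly Y)) x \<le> count (proots (charpoly X)) x" for x
    using count[of x] by (cases "x = complex_of_real c") (auto simp: not_in_iff)
  then show ?thesis by (rule mset_subset_eqI)
qed

lemma frame_compression_eigenvalue:
  fixes A :: "real^'n::finite^'n" and U :: "real^'r::finite^'n"
  assumes U: "U \<in> frames A lam" and root: "poly (charpoly (transpose U ** A ** U)) a = 0"
  shows "\<exists>i<CARD('r). a = lam i"
proof -
  have UU: "transpose U ** U = mat 1"
    and rng: "range (\<lambda>c. cmat U *v c) = vec.span (\<Union>i\<in>{..<CARD('r)}. gen_eigvecs A (lam i))"
    using U unfolding frames_def by auto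
  obtain v where "v \<noteq> 0" and ev: "cmat (transpose U ** A ** U) *v v = a *s v"
    using charpoly_root_eigvec[OF root] by blast
  define w where "w = cmat U *v v"
  have "cmat (transpose U) *v w = v"
    unfolding w_def by (simp add: matrix_vector_mul_assoc cmat_mult[symmetric] UU cmat_one)
  then have "w \<noteq> 0" using \<open>v \<noteq> 0\<close> by auto
  have "cmat A *v w = cmat (A ** U) *v v"
    unfolding w_def by (simp add: matrix_vector_mul_assoc cmat_mult)
  also have "\<dots> = cmat U *v (cmat (transpose U ** A ** U) *v v)"
    by (subst frame_intertwine[OF U]) (simp add: matrix_vector_mul_assoc cmat_mult)
  also have "\<dots> = a *s w"
    unfolding ev w_def by (simp add: vector_scalar_commute)
  finally have "cmat A *v w = a *s w" .
  moreover have "w \<in> vec.span (\<Union>i\<in>{..<CARD('r)}. gen_eigvecs A (lam i))"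
    using rng unfolding w_def by blast
  ultimately show ?thesis
    using eigenvalue_of_eigvec_in_span_gen_eigvecs \<open>w \<noteq> 0\<close> by blast
qed

lemma prod_list_mset: "(\<Prod>a\<leftarrow>xs. f a) = (\<Prod>a\<in>#mset xs. f a)"
  by (metis mset_map prod_mset_prod_list)

lemma filter_leading_values:
  fixes lam :: "nat \<Rightarrow> complex"
  assumes r_lt_n: "r < n"
    and sorted: "\<And>i j. i \<le> j \<Longrightarrow> j < n \<Longrightarrow> Re (lam j) \<le> Re (lam i)"
    and gap: "Re (lam r) < Re (lam (r - 1))"
  shows "filter (\<lambda>a. a \<in> lam ` {..<r}) (map lam [0..<n]) = map lam [0..<r]"
proof -
  have lam_lead: "lam i \<in> lam ` {..<r} \<longleftrightarrow> i < r" if "i < n" for i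
  proof
    assume "lam i \<in> lam ` {..<r}"
    then obtain j where j: "j < r" "lam i = lam j" by auto
    show "i < r"
    proof (rule ccontr)
      assume "\<not> i < r"
      then have "Re (lam i) \<le> Re (lam r)" using sorted[of r i] that by simp
      also have "\<dots> < Re (lam (r - 1))" by (rule gap)
      also have "\<dots> \<le> Re (lam j)" using sorted[of j "r - 1"] j r_lt_n by simp
      finally show False using j by simp
    qed
  qed auto
  have "[0..<n] = [0..<r] @ [r..<n]"
    using r_lt_n upt_add_eq_append[of 0 r "n - r"] by simp
  moreover have "filter (\<lambda>a. a \<in> lam ` {..<r}) (map lam [0..<r]) = map lam [0..<r]"
    using lam_lead r_lt_n by (auto simp: filter_id_conv)
  moreover have "filter (\<lambda>a. a \<in> lam ` {..<r}) (map lam [r..<n]) = []"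
    using lam_lead by (auto simp: filter_empty_conv)
  ultimately show ?thesis by simp
qed

lemma charpoly_frame_compression:
  fixes A :: "real^'n::finite^'n" and lam :: "nat \<Rightarrow> complex" and U :: "real^'r::finite^'n"
  assumes r_lt_n: "CARD('r) < CARD('n)"
    and eigs: "charpoly A = (\<Prod>i<CARD('n). [:- lam i, 1:])"
    and sorted: "\<And>i j. i \<le> j \<Longrightarrow> j < CARD('n) \<Longrightarrow> Re (lam j) \<le> Re (lam i)"
    and gap: "Re (lam CARD('r)) < Re (lam (CARD('r) - 1))"
    and U: "U \<in> frames A lam"
  shows "charpoly (transpose U ** A ** U) = (\<Prod>i<CARD('r). [:- lam i, 1:])"
proof -
  define n where "n = CARD('n)"
  define r where "r = CARD('r)"
  define S where "S = lam ` {..<r}"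
  let ?R = "proots (charpoly (transpose U ** A ** U))"
  have "transpose U ** U = mat 1" using U unfolding frames_def by simp
  then have "?R \<subseteq># proots (charpoly A)"
    by (rule proots_charpoly_subseteq_intertwine[OF frame_intertwine[OF U]])
  also have "proots (charpoly A) = mset (map lam [0..<n])"
    using proots_linear_factors[of "map lam [0..<n]"]
    by (simp add: eigs prod_lessThan_list o_def n_def)
  finally have sub: "?R \<subseteq># mset (map lam [0..<n])" .
  have "a \<in> S" if "a \<in># ?R" for a
    using that frame_compression_eigenvalue[OF U, of a] charpoly_nonzero[of "transpose U ** A ** U"]
    unfolding S_def r_def by auto
  then have "?R = filter_mset (\<lambda>a. a \<in> S) ?R"
    using filter_mset_cong0[of ?R "\<lambda>a. a \<in> S" "\<lambda>_. True"] by simp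
  also have "\<dots> \<subseteq># filter_mset (\<lambda>a. a \<in> S) (mset (map lam [0..<n]))"
    by (rule multiset_filter_mono[OF sub])
  also have "\<dots> = mset (map lam [0..<r])"
    using filter_leading_values[OF r_lt_n sorted gap] unfolding S_def n_def r_def
    by (metis mset_filter)
  finally have "?R \<subseteq># mset (map lam [0..<r])" .
  moreover have "size ?R = size (mset (map lam [0..<r]))"
    by (simp add: size_proots_complex degree_charpoly r_def)
  ultimately have R: "?R = mset (map lam [0..<r])"
    by (metis less_irrefl mset_subset_size subset_mset.le_imp_less_or_eq)
  have "charpoly (transpose U ** A ** U) = (\<Prod>a\<in>#?R. [:- a, 1:])"
    by (rule charpoly_eq_prod_proots)
  also have "\<dots> = (\<Prod>a\<leftarrow>map lam [0..<r]. [:- a, 1:])"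
    unfolding R by (rule prod_list_mset[symmetric])
  finally show ?thesis
    by (simp add: prod_lessThan_list o_def r_def)
qed

lemma compression_eq_of_intertwine:
  assumes "X ** U = U ** Y" and "L ** U = mat 1"
  shows "L ** X ** U = Y"
  using assms by (metis matrix_mul_assoc matrix_mul_lid)

theorem proposition6:
  fixes A :: "real^'n^'n" and lam :: "nat \<Rightarrow> complex"
    and h :: real and G :: "real^'q^'n" and C :: "real^'n^'p" and H :: "real^'p^'p"
    and U :: "real^'r^'n" and R :: "real^'r^'r"
  assumes r_lt_n: "CARD('r) < CARD('n)"
    and eigs: "charpoly A = (\<Prod>i<CARD('n). [:- lam i, 1:])"
    and sorted: "\<And>i j. i \<le> j \<Longrightarrow> j < CARD('n) \<Longrightarrow> Re (lam j) \<le> Re (lam i)"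
    and gap: "Re (lam CARD('r)) < Re (lam (CARD('r) - 1))"
    and h_pos: "h > 0"
    and H_inv: "det H \<noteq> 0"
    and U_in: "U \<in> frames A lam"
    and reach: "reachable (transpose U ** mexp (h *\<^sub>R A) ** U) (transpose U ** disc_noise h A G)"
    and obs: "observable (C ** U) (transpose U ** mexp (h *\<^sub>R A) ** U)"
    and R_pd: "pd R"
    and R_eq: "let Ad = mexp (h *\<^sub>R A); AU = transpose U ** Ad ** U;
                   GU = transpose U ** disc_noise h A G; CU = C ** U; M = H ** transpose H;
                   F = R ** transpose CU ** matrix_inv (CU ** R ** transpose CU + M)
               in R = AU ** (R - F ** CU ** R) ** transpose AU + GU ** transpose GU"
  shows "let Ad = mexp (h *\<^sub>R A); AU = transpose U ** Ad ** U; CU = C ** U;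
             M = H ** transpose H;
             F = R ** transpose CU ** matrix_inv (CU ** R ** transpose CU + M)
         in charpoly (Ad ** (mat 1 - U ** F ** C))
              = charpoly (AU ** (mat 1 - F ** CU))
                * (\<Prod>i\<in>{CARD('r)..<CARD('n)}. [:- exp (lam i * complex_of_real h), 1:])"
proof -
  \<comment> \<open>The Riccati, reachability and observability hypotheses only serve to define \<open>R\<close>;
    the spectral identity holds for every gain \<open>F\<close>.\<close>
  define Ad where "Ad = mexp (h *\<^sub>R A)"
  define B where "B = transpose U ** A ** U"
  define AU where "AU = transpose U ** Ad ** U"
  define F where "F = R ** transpose (C ** U) **
    matrix_inv (C ** U ** R ** transpose (C ** U) + H ** transpose H)"
  have UU: "transpose U ** U = mat 1" using U_in unfolding frames_def by simp
  have AdU_exp: "Ad ** U = U ** mexp (h *\<^sub>R B)"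
    unfolding Ad_def B_def using frame_intertwine[OF U_in]
    by (intro mexp_intertwine) (simp add: scaleR_matrix_mult_left scaleR_matrix_mult_right)
  then have AdU: "Ad ** U = U ** AU"
    unfolding AU_def compression_eq_of_intertwine[OF AdU_exp UU] .
  have "charpoly AU = (\<Prod>i<CARD('r). [:- exp (lam i * complex_of_real h), 1:])"
    unfolding AU_def compression_eq_of_intertwine[OF AdU_exp UU] B_def
    by (intro charpoly_mexp charpoly_frame_compression r_lt_n eigs sorted gap U_in)
  moreover have "charpoly Ad = (\<Prod>i<CARD('n). [:- exp (lam i * complex_of_real h), 1:])"
    unfolding Ad_def by (rule charpoly_mexp[OF eigs])
  ultimately have "charpoly Ad = charpoly AU *
      (\<Prod>i\<in>{CARD('r)..<CARD('n)}. [:- exp (lam i * complex_of_real h), 1:])"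
    using r_lt_n by (simp add: atLeast0LessThan[symmetric] prod.atLeastLessThan_concat)
  from charpoly_deflation[OF AdU this, of "AU ** F ** C"]
  show ?thesis
    unfolding Let_def Ad_def[symmetric] AU_def[symmetric] F_def[symmetric]
    by (simp add: matrix_sub_ldistrib matrix_mul_assoc AdU)
qed

end
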